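(* Fix constants $\mu_1,\ldots,\mu_M\ge 0$ and $P_1^{\rm ST},\ldots,P_K^{\rm ST}>0$. For a channel realization $\boldsymbol{\alpha}$ consider the problem $$\max_{p_1,\ldots,p_K}\ \log\Big(1+\sum_{k=1}^K h_kp_k\Big)-\sum_{m=1}^M\mu_m\sum_{k=1}^K g_{km}p_k\quad\text{s.t.}\quad 0\le p_k\le P_k^{\rm ST}\ \ \forall k.$$ Let $r_k=\frac{h_k}{\sum_{m=1}^M\mu_m g_{km}}$ and let $\pi$ be a permutation of $\{1,\ldots,K\}$ with $r_{\pi(1)}\ge r_{\pi(2)}\ge\cdots\ge r_{\pi(K)}$. Let $|\mathcal{I}|$ be the largest $x\in\{1,\ldots,K\}$ such that $r_{\pi(x)}>1+\sum_{b=1}^{x-1}h_{\pi(b)}P_{\pi(b)}^{\rm ST}$ (and $|\mathcal{I}|=0$ if no such $x$ exists). Then, for almost every realization $\boldsymbol{\alpha}$, the optimal solution is $$p_{\pi(a)}^*=\begin{cases}P_{\pi(a)}^{\rm ST}, & a<|\mathcal{I}|,\\[2pt] \min\Big(P_{\pi(|\mathcal{I}|)}^{\rm ST},\ \Big(r_{\pi(|\mathcal{I}|)}-1-\sum_{b=1}^{|\mathcal{I}|-1}h_{\pi(b)}P_{\pi(b)}^{\rm ST}\Big)\frac{1}{h_{\pi(|\mathcal{I}|)}}\Big), & a=|\mathcal{I}|,\\[2pt] 0, & a>|\mathcal{I}|.\end{cases}$$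
   Context: $\boldsymbol{\alpha}=(h_1,\ldots,h_K,g_{11},\ldots,g_{KM})$ is a random vector of nonnegative channel power gains ($h_k$: secondary user $k$ to secondary base station; $g_{km}$: secondary user $k$ to primary receiver $m$) with a continuous, differentiable joint cumulative distribution function, the $h_k$'s and $g_{km}$'s being independent. Convention: $x/0=+\infty$ for $x>0$ and $\min(a,+\infty)=a$. *)

theory Defs
  imports "HOL-Probability.Probability"
begin

text \<open>Users are indexed by a finite type 'k (K = CARD('k)), primary receivers by a
finite type 'm (M = CARD('m)).  A channel realization is given by
h :: 'k => real and g :: 'k => 'm => real.\<close>

definition interf_cost :: "('m::finite \<Rightarrow> real) \<Rightarrow> ('k \<Rightarrow> 'm \<Rightarrow> real) \<Rightarrow> 'k \<Rightarrow> real" where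
  "interf_cost mu g k = (\<Sum>m\<in>UNIV. mu m * g k m)"

text \<open>r_k = h_k / (sum_m mu_m g_km), with the convention x/0 = +infinity.\<close>
definition ratio :: "('m::finite \<Rightarrow> real) \<Rightarrow> ('k \<Rightarrow> real) \<Rightarrow> ('k \<Rightarrow> 'm \<Rightarrow> real) \<Rightarrow> 'k \<Rightarrow> ereal" where
  "ratio mu h g k = (if interf_cost mu g k = 0 then PInfty else ereal (h k / interf_cost mu g k))"

definition objective :: "('m::finite \<Rightarrow> real) \<Rightarrow> ('k::finite \<Rightarrow> real) \<Rightarrow> ('k \<Rightarrow> 'm \<Rightarrow> real)
    \<Rightarrow> ('k \<Rightarrow> real) \<Rightarrow> real" where
  "objective mu h g p = ln (1 + (\<Sum>k\<in>UNIV. h k * p k)) - (\<Sum>m\<in>UNIV. mu m * (\<Sum>k\<in>UNIV. g k m * p k))"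

definition feasible :: "('k \<Rightarrow> real) \<Rightarrow> ('k \<Rightarrow> real) \<Rightarrow> bool" where
  "feasible Pst p \<longleftrightarrow> (\<forall>k. 0 \<le> p k \<and> p k \<le> Pst k)"

definition partial_rx :: "('k \<Rightarrow> real) \<Rightarrow> ('k \<Rightarrow> real) \<Rightarrow> (nat \<Rightarrow> 'k) \<Rightarrow> nat \<Rightarrow> real" where
  "partial_rx Pst h \<pi> x = (\<Sum>b = 1..<x. h (\<pi> b) * Pst (\<pi> b))"

definition Icard :: "('m::finite \<Rightarrow> real) \<Rightarrow> ('k::finite \<Rightarrow> real) \<Rightarrow> ('k \<Rightarrow> real) \<Rightarrow> ('k \<Rightarrow> 'm \<Rightarrow> real)
    \<Rightarrow> (nat \<Rightarrow> 'k) \<Rightarrow> nat" where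
  "Icard mu Pst h g \<pi> = Max ({0} \<union> {x \<in> {1..CARD('k)}.
      ratio mu h g (\<pi> x) > ereal (1 + partial_rx Pst h \<pi> x)})"

definition opt_power :: "('m::finite \<Rightarrow> real) \<Rightarrow> ('k::finite \<Rightarrow> real) \<Rightarrow> ('k \<Rightarrow> real) \<Rightarrow> ('k \<Rightarrow> 'm \<Rightarrow> real)
    \<Rightarrow> (nat \<Rightarrow> 'k) \<Rightarrow> nat \<Rightarrow> real" where
  "opt_power mu Pst h g \<pi> a =
    (let I = Icard mu Pst h g \<pi> in
     if a < I then Pst (\<pi> a)
     else if a = I then
       (if ratio mu h g (\<pi> I) = PInfty then Pst (\<pi> I)
        else min (Pst (\<pi> I))
                 ((real_of_ereal (ratio mu h g (\<pi> I)) - 1 - partial_rx Pst h \<pi> I) * (1 / h (\<pi> I))))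
     else 0)"

end

theory Submission
  imports Defs
begin

text \<open>The objective is concave, so a feasible allocation satisfying the KKT conditions
  maximises it.  With \<open>S = 1 + \<Sum>\<^sub>k h\<^sub>k p\<^sub>k\<close>, these conditions say that every user below its cap has
  \<open>r\<^sub>k \<le> S\<close> and every user with positive power has \<open>r\<^sub>k \<ge> S\<close>; for the claimed allocation they
  follow from the maximality of \<open>|I|\<close> and the ordering of the ratios.  The maximiser is unique
  unless two users share the finite ratio \<open>S\<close>.  Such ties, and vanishing direct gains, only occur
  on a set of gain vectors that is a differentiable image of a subset of a hyperplane, hence
  Lebesgue-null, and absolute continuity of the joint law of the gains makes them a null event.\<close>

lemma borel_measurable_vec_lambda:
  fixes f :: "'i::finite \<Rightarrow> 'w \<Rightarrow> real"
  assumes "\<And>i. f i \<in> borel_measurable M"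
  shows "(\<lambda>w. \<chi> i. f i w) \<in> borel_measurable M"
  unfolding borel_measurable_euclidean_space[where 'c="real^'i"]
  using assms by (auto simp: Basis_vec_def inner_axis)

lemma AE_not_in_negligible:
  fixes F :: "'w \<Rightarrow> 'a::euclidean_space"
  assumes "F \<in> borel_measurable M" "absolutely_continuous lborel (distr M lborel F)" "negligible T"
  shows "AE w in M. F w \<notin> T"
proof -
  obtain N where N: "N \<in> null_sets lborel" "T \<subseteq> N"
    using assms(3) unfolding negligible_iff_null_sets null_sets_completion_iff2 by blast
  then have "F -` N \<inter> space M \<in> null_sets M"
    using assms(1,2) null_sets_distr_iff[of F M lborel] unfolding absolutely_continuous_def by auto
  then show ?thesis by (rule AE_I') (use N in auto)
qed

text \<open>The set is the image of \<open>{y \<in> U. b \<bullet> y = 0}\<close> under \<open>y \<mapsto> y + f y *\<^sub>R b /\<^sub>R (b \<bullet> b)\<close>.\<close>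

lemma negligible_graph_along_direction:
  fixes f :: "'a::euclidean_space \<Rightarrow> real"
  assumes b: "b \<noteq> 0" and f: "f differentiable_on U"
    and shift_invariant: "\<And>x t. x \<in> U \<Longrightarrow> x + t *\<^sub>R b \<in> U \<and> f (x + t *\<^sub>R b) = f x"
  shows "negligible {x \<in> U. b \<bullet> x = f x}"
proof -
  define v where "v = b /\<^sub>R (b \<bullet> b)"
  define \<phi> where "\<phi> y = y + f y *\<^sub>R v" for y
  have "negligible (\<phi> ` {y \<in> U. b \<bullet> y = 0})"
  proof (rule negligible_differentiable_image_negligible)
    show "negligible {y \<in> U. b \<bullet> y = 0}"
      by (rule negligible_subset[OF negligible_hyperplane[of b 0]]) (use b in auto)
    show "\<phi> differentiable_on {y \<in> U. b \<bullet> y = 0}"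
      unfolding \<phi>_def using differentiable_on_subset[OF f, of "{y \<in> U. b \<bullet> y = 0}"]
      by (intro differentiable_on_add differentiable_on_scaleR differentiable_on_ident differentiable_on_const) auto
  qed simp
  moreover have "{x \<in> U. b \<bullet> x = f x} \<subseteq> \<phi> ` {y \<in> U. b \<bullet> y = 0}"
  proof
    fix x assume x: "x \<in> {x \<in> U. b \<bullet> x = f x}"
    define y where "y = x + (- (b \<bullet> x)) *\<^sub>R v"
    have y: "y \<in> U" "f y = f x"
      using shift_invariant[of x "- (b \<bullet> x) / (b \<bullet> b)"] x by (auto simp: y_def v_def divide_inverse)
    moreover have "b \<bullet> y = 0" using b by (simp add: y_def v_def inner_diff_right)
    moreover have "\<phi> y = x" using x unfolding \<phi>_def y(2) by (simp add: y_def)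
    ultimately show "x \<in> \<phi> ` {y \<in> U. b \<bullet> y = 0}" by blast
  qed
  ultimately show ?thesis by (rule negligible_subset)
qed

definition ratio_tie_set :: "('m::finite \<Rightarrow> real) \<Rightarrow> 'k::finite \<Rightarrow> 'k \<Rightarrow> ((real^'k) \<times> (real^('k \<times> 'm))) set"
  where "ratio_tie_set mu j k = {x.
    interf_cost mu (\<lambda>i m. snd x $ (i, m)) k \<noteq> 0 \<and>
    fst x $ j * interf_cost mu (\<lambda>i m. snd x $ (i, m)) k = fst x $ k * interf_cost mu (\<lambda>i m. snd x $ (i, m)) j}"

lemma negligible_ratio_tie_set:
  fixes mu :: "'m::finite \<Rightarrow> real" and j k :: "'k::finite"
  assumes "j \<noteq> k"
  shows "negligible (ratio_tie_set mu j k)"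
proof -
  let ?c = "\<lambda>i (x :: (real^'k) \<times> (real^('k \<times> 'm))). interf_cost mu (\<lambda>i m. snd x $ (i, m)) i"
  have coord: "(\<lambda>x :: (real^'k) \<times> (real^('k \<times> 'm)). fst x $ i) differentiable F"
    "(\<lambda>x :: (real^'k) \<times> (real^('k \<times> 'm)). snd x $ l) differentiable F" for i l F
    by (intro bounded_linear_imp_differentiable bounded_linear_compose[OF bounded_linear_vec_nth]
        bounded_linear_fst bounded_linear_snd)+
  have c_diff: "(\<lambda>x. ?c i x) differentiable (at x within S)" for i x S
    unfolding interf_cost_def by (auto intro!: derivative_intros coord)
  define b :: "(real^'k) \<times> (real^('k \<times> 'm))" where "b = (axis j 1, 0)"
  define U where "U = {x. ?c k x \<noteq> 0}"
  define f where "f x = fst x $ k * ?c j x / ?c k x" for x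
  have "negligible {x \<in> U. b \<bullet> x = f x}"
  proof (rule negligible_graph_along_direction)
    show "b \<noteq> 0" by (simp add: b_def zero_prod_def axis_eq_0_iff)
    show "f differentiable_on U"
      unfolding differentiable_on_def f_def U_def
      by (auto intro!: differentiable_divide differentiable_mult c_diff coord)
    show "x + t *\<^sub>R b \<in> U \<and> f (x + t *\<^sub>R b) = f x" if "x \<in> U" for x t
      using that assms by (simp add: U_def f_def b_def axis_def)
  qed
  moreover have "ratio_tie_set mu j k = {x \<in> U. b \<bullet> x = f x}"
    by (auto simp: ratio_tie_set_def U_def f_def b_def inner_prod_def inner_axis' field_simps)
  ultimately show ?thesis by simp
qed

text \<open>The realizations discarded by \<open>almost every\<close>: a vanishing direct gain, or two users
  with the same finite ratio.\<close>

definition generic_channel :: "('m::finite \<Rightarrow> real) \<Rightarrow> ('k \<Rightarrow> real) \<Rightarrow> ('k \<Rightarrow> 'm \<Rightarrow> real) \<Rightarrow> bool" where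
  "generic_channel mu h g \<longleftrightarrow> (\<forall>k. h k \<noteq> 0) \<and>
     (\<forall>j k. j \<noteq> k \<longrightarrow> interf_cost mu g k \<noteq> 0 \<longrightarrow> h j * interf_cost mu g k \<noteq> h k * interf_cost mu g j)"

lemma AE_generic_channel:
  fixes H :: "'k::finite \<Rightarrow> 'w \<Rightarrow> real" and G :: "'k \<Rightarrow> 'm::finite \<Rightarrow> 'w \<Rightarrow> real"
  assumes "\<And>k. H k \<in> borel_measurable M" and "\<And>k m. G k m \<in> borel_measurable M"
    and "absolutely_continuous lborel
           (distr M lborel (\<lambda>w. ((\<chi> k. H k w) :: real^'k,
                                  (\<chi> km. G (fst km) (snd km) w) :: real^('k \<times> 'm))))"
  shows "AE w in M. generic_channel mu (\<lambda>k. H k w) (\<lambda>k m. G k m w)"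
proof -
  define F where "F w = ((\<chi> k. H k w) :: real^'k, (\<chi> km. G (fst km) (snd km) w) :: real^('k \<times> 'm))" for w
  have F: "F \<in> borel_measurable M"
    unfolding F_def using assms(1,2) by (intro borel_measurable_Pair borel_measurable_vec_lambda) auto
  have ac: "absolutely_continuous lborel (distr M lborel F)"
    using assms(3) unfolding F_def .
  have "AE w in M. \<forall>k\<in>UNIV. F w \<notin> {x. (axis k 1, 0) \<bullet> x = 0}"
    by (intro AE_finite_allI AE_not_in_negligible[OF F ac] negligible_hyperplane)
       (auto simp: zero_prod_def axis_eq_0_iff)
  moreover have "AE w in M. \<forall>(j, k)\<in>{(j, k). j \<noteq> k}. F w \<notin> ratio_tie_set mu j k"
    by (intro AE_finite_allI) (auto intro: AE_not_in_negligible[OF F ac negligible_ratio_tie_set])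
  ultimately show ?thesis
    by eventually_elim (auto simp: generic_channel_def F_def ratio_tie_set_def inner_prod_def inner_axis')
qed

lemma complementary_slackness_mult_nonpos:
  fixes u p q P :: real
  assumes "0 \<le> q" "q \<le> P" "p < P \<Longrightarrow> u \<le> 0" "0 < p \<Longrightarrow> 0 \<le> u"
  shows "u * (q - p) \<le> 0"
proof (cases "p \<le> q")
  case True
  then show ?thesis using assms by (cases "p = q") (auto intro: mult_nonpos_nonneg)
next
  case False
  then show ?thesis using assms by (auto intro: mult_nonneg_nonpos)
qed

text \<open>The tangent-line bound \<open>ln Sq - ln S \<le> (Sq - S) / S\<close> plus complementary slackness in each
  coordinate; the single-tie hypothesis rules out equality.\<close>

lemma log_linear_kkt_strict_max:
  fixes h c P p q :: "'k::finite \<Rightarrow> real"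
  assumes h_pos: "\<And>k. 0 < h k" and p: "feasible P p" and q: "feasible P q" and "q \<noteq> p"
    and S: "S = 1 + (\<Sum>k\<in>UNIV. h k * p k)"
    and below_cap: "\<And>k. p k < P k \<Longrightarrow> h k \<le> S * c k"
    and above_zero: "\<And>k. 0 < p k \<Longrightarrow> S * c k \<le> h k"
    and single_tie: "\<And>j k. h j = S * c j \<Longrightarrow> h k = S * c k \<Longrightarrow> j = k"
  shows "ln (1 + (\<Sum>k\<in>UNIV. h k * q k)) - (\<Sum>k\<in>UNIV. c k * q k) < ln S - (\<Sum>k\<in>UNIV. c k * p k)"
proof -
  define Sq where "Sq = 1 + (\<Sum>k\<in>UNIV. h k * q k)"
  define d where "d k = (h k - S * c k) * (q k - p k)" for k
  have S_pos: "0 < S" and Sq_pos: "0 < Sq"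
    using p q h_pos unfolding S Sq_def feasible_def
    by (auto intro!: add_pos_nonneg sum_nonneg simp: less_imp_le)
  have gain: "Sq - S = (\<Sum>k\<in>UNIV. h k * (q k - p k))"
    unfolding Sq_def S by (simp add: sum_subtractf algebra_simps)
  have d_sum: "(\<Sum>k\<in>UNIV. d k) = (Sq - S) - S * ((\<Sum>k\<in>UNIV. c k * q k) - (\<Sum>k\<in>UNIV. c k * p k))"
  proof -
    have "d k = h k * (q k - p k) - S * (c k * q k - c k * p k)" for k
      unfolding d_def by (simp add: algebra_simps)
    then show ?thesis unfolding gain by (simp add: sum_subtractf sum_distrib_left[symmetric])
  qed
  have d_nonpos: "d k \<le> 0" for k
    unfolding d_def
  proof (rule complementary_slackness_mult_nonpos)
    show "0 \<le> q k" "q k \<le> P k" using q by (auto simp: feasible_def)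
  qed (use below_cap[of k] above_zero[of k] in auto)
  have d_neg_if_level: "(\<Sum>k\<in>UNIV. d k) < 0" if "Sq = S"
  proof (rule ccontr)
    assume "\<not> (\<Sum>k\<in>UNIV. d k) < 0"
    then have "(\<Sum>k\<in>UNIV. - d k) = 0"
      using d_nonpos by (simp add: sum_negf not_less order_antisym sum_nonpos)
    then have d_zero: "d k = 0" for k
      using d_nonpos sum_nonneg_eq_0_iff[of UNIV "\<lambda>k. - d k"] by simp
    obtain k0 where k0: "q k0 \<noteq> p k0" using \<open>q \<noteq> p\<close> by auto
    then have tie: "h k0 = S * c k0" using d_zero[of k0] by (simp add: d_def)
    have "q j = p j" if "j \<noteq> k0" for j
      using d_zero[of j] single_tie[OF _ tie] that by (auto simp: d_def)
    then have "Sq - S = h k0 * (q k0 - p k0)"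
      unfolding gain by (subst sum.remove[of UNIV k0]) (auto intro: sum.neutral)
    then show False using that k0 h_pos[of k0] by simp
  qed
  have "ln Sq - ln S < (\<Sum>k\<in>UNIV. c k * q k) - (\<Sum>k\<in>UNIV. c k * p k)"
  proof (cases "Sq = S")
    case True
    then show ?thesis using d_neg_if_level d_sum S_pos by (simp add: zero_less_mult_iff)
  next
    case False
    have "ln Sq - ln S < (Sq - S) / S" using ln_diff_less[OF Sq_pos S_pos False] .
    also have "\<dots> = (\<Sum>k\<in>UNIV. c k * q k) - (\<Sum>k\<in>UNIV. c k * p k) + (\<Sum>k\<in>UNIV. d k) / S"
      using d_sum S_pos by (simp add: field_simps)
    also have "\<dots> \<le> (\<Sum>k\<in>UNIV. c k * q k) - (\<Sum>k\<in>UNIV. c k * p k)"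
      using sum_nonpos[of UNIV d] d_nonpos S_pos by (simp add: divide_nonpos_pos)
    finally show ?thesis .
  qed
  then show ?thesis unfolding Sq_def by simp
qed

lemma objective_eq_interf_cost:
  "objective mu h g q = ln (1 + (\<Sum>k\<in>UNIV. h k * q k)) - (\<Sum>k\<in>UNIV. interf_cost mu g k * q k)"
proof -
  have "(\<Sum>m\<in>UNIV. mu m * (\<Sum>k\<in>UNIV. g k m * q k)) = (\<Sum>m\<in>UNIV. \<Sum>k\<in>UNIV. mu m * g k m * q k)"
    by (simp add: sum_distrib_left mult.assoc)
  also have "\<dots> = (\<Sum>k\<in>UNIV. \<Sum>m\<in>UNIV. mu m * g k m * q k)"
    by (rule sum.swap)
  also have "\<dots> = (\<Sum>k\<in>UNIV. interf_cost mu g k * q k)"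
    by (simp add: interf_cost_def sum_distrib_right)
  finally show ?thesis unfolding objective_def by simp
qed

lemma interf_cost_nonneg: "(\<And>m. 0 \<le> mu m) \<Longrightarrow> (\<And>m. 0 \<le> g k m) \<Longrightarrow> 0 \<le> interf_cost mu g k"
  unfolding interf_cost_def by (simp add: sum_nonneg)

lemma ratio_le_ereal_imp_le_mult:
  assumes "0 \<le> interf_cost mu g k" "ratio mu h g k \<le> ereal s"
  shows "h k \<le> s * interf_cost mu g k"
proof -
  have "interf_cost mu g k \<noteq> 0" using assms(2) by (auto simp: ratio_def)
  with assms show ?thesis by (simp add: ratio_def divide_le_eq mult.commute)
qed

lemma ereal_le_ratio_imp_mult_le:
  assumes "0 \<le> interf_cost mu g k" "0 \<le> h k" "ereal s \<le> ratio mu h g k"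
  shows "s * interf_cost mu g k \<le> h k"
  using assms by (cases "interf_cost mu g k = 0") (auto simp: ratio_def le_divide_eq mult.commute)

lemma partial_rx_empty: "x \<le> 1 \<Longrightarrow> partial_rx P h \<pi> x = 0"
  unfolding partial_rx_def by simp

lemma partial_rx_Suc: "1 \<le> x \<Longrightarrow> partial_rx P h \<pi> (Suc x) = partial_rx P h \<pi> x + h (\<pi> x) * P (\<pi> x)"
  unfolding partial_rx_def by simp

lemma Icard_eq_Max:
  fixes \<pi> :: "nat \<Rightarrow> 'k::finite"
  shows "Icard mu P h g \<pi> = Max (insert 0 {x \<in> {1..CARD('k)}. ereal (1 + partial_rx P h \<pi> x) < ratio mu h g (\<pi> x)})"
  unfolding Icard_def by simp

lemma Icard_le_card:
  fixes \<pi> :: "nat \<Rightarrow> 'k::finite"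
  shows "Icard mu P h g \<pi> \<le> CARD('k)"
  unfolding Icard_eq_Max by (subst Max_le_iff) auto

lemma Icard_active:
  fixes \<pi> :: "nat \<Rightarrow> 'k::finite"
  assumes "1 \<le> Icard mu P h g \<pi>"
  shows "ereal (1 + partial_rx P h \<pi> (Icard mu P h g \<pi>)) < ratio mu h g (\<pi> (Icard mu P h g \<pi>))"
proof -
  have "Icard mu P h g \<pi> \<in> insert 0 {x \<in> {1..CARD('k)}. ereal (1 + partial_rx P h \<pi> x) < ratio mu h g (\<pi> x)}"
    unfolding Icard_eq_Max by (intro Max_in) auto
  with assms show ?thesis by auto
qed

lemma inactive_after_Icard:
  fixes \<pi> :: "nat \<Rightarrow> 'k::finite"
  assumes "Icard mu P h g \<pi> < x" "x \<le> CARD('k)"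
  shows "ratio mu h g (\<pi> x) \<le> ereal (1 + partial_rx P h \<pi> x)"
proof (rule ccontr)
  assume "\<not> ratio mu h g (\<pi> x) \<le> ereal (1 + partial_rx P h \<pi> x)"
  then have "x \<le> Icard mu P h g \<pi>"
    unfolding Icard_eq_Max using assms(1,2) by (intro Max_ge) (auto simp: not_le)
  with assms(1) show False by simp
qed

lemma opt_power_below_Icard: "a < Icard mu P h g \<pi> \<Longrightarrow> opt_power mu P h g \<pi> a = P (\<pi> a)"
  and opt_power_above_Icard: "Icard mu P h g \<pi> < a \<Longrightarrow> opt_power mu P h g \<pi> a = 0"
  and opt_power_Icard_PInfty:
    "ratio mu h g (\<pi> (Icard mu P h g \<pi>)) = PInfty \<Longrightarrow>
     opt_power mu P h g \<pi> (Icard mu P h g \<pi>) = P (\<pi> (Icard mu P h g \<pi>))"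
  and opt_power_Icard_ereal:
    "ratio mu h g (\<pi> (Icard mu P h g \<pi>)) = ereal \<rho> \<Longrightarrow>
     opt_power mu P h g \<pi> (Icard mu P h g \<pi>) =
       min (P (\<pi> (Icard mu P h g \<pi>)))
           ((\<rho> - 1 - partial_rx P h \<pi> (Icard mu P h g \<pi>)) / h (\<pi> (Icard mu P h g \<pi>)))"
  unfolding opt_power_def Let_def by auto

locale water_filling =
  fixes mu :: "'m::finite \<Rightarrow> real" and Pst :: "'k::finite \<Rightarrow> real"
    and h :: "'k \<Rightarrow> real" and g :: "'k \<Rightarrow> 'm \<Rightarrow> real" and \<pi> :: "nat \<Rightarrow> 'k"
  assumes mu_nonneg: "\<And>m. 0 \<le> mu m" and Pst_pos: "\<And>k. 0 < Pst k"
    and h_pos: "\<And>k. 0 < h k" and g_nonneg: "\<And>k m. 0 \<le> g k m"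
    and perm: "bij_betw \<pi> {1..CARD('k)} UNIV"
    and ratio_sorted: "\<And>a b. 1 \<le> a \<Longrightarrow> a \<le> b \<Longrightarrow> b \<le> CARD('k) \<Longrightarrow> ratio mu h g (\<pi> b) \<le> ratio mu h g (\<pi> a)"
begin

abbreviation "r \<equiv> ratio mu h g"
abbreviation "I \<equiv> Icard mu Pst h g \<pi>"
abbreviation "rx_prefix \<equiv> partial_rx Pst h \<pi>"
abbreviation "p_opt \<equiv> opt_power mu Pst h g \<pi>"

text \<open>Instances at the locale parameters: the general forms leave the higher-order
  unification with \<open>\<pi> (Icard \<dots>)\<close> ambiguous.\<close>

lemmas opt_power_below_Icard = opt_power_below_Icard[where mu=mu and P=Pst and h=h and g=g and \<pi>=\<pi>]
  and opt_power_above_Icard = opt_power_above_Icard[where mu=mu and P=Pst and h=h and g=g and \<pi>=\<pi>]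
  and opt_power_Icard_PInfty = opt_power_Icard_PInfty[where mu=mu and P=Pst and h=h and g=g and \<pi>=\<pi>]
  and opt_power_Icard_ereal = opt_power_Icard_ereal[where mu=mu and P=Pst and h=h and g=g and \<pi>=\<pi>]

text \<open>The KKT conditions compare every ratio with this level.\<close>

definition water_level :: real where
  "water_level = 1 + (\<Sum>a\<in>{1..CARD('k)}. h (\<pi> a) * p_opt a)"

lemma opt_power_Icard_bounds:
  assumes "1 \<le> I"
  shows "0 \<le> p_opt I \<and> p_opt I \<le> Pst (\<pi> I)"
proof (cases "r (\<pi> I)")
  case (real \<rho>)
  then have "1 + rx_prefix I < \<rho>" using Icard_active[OF assms] by simp
  then show ?thesis
    using opt_power_Icard_ereal[OF real] h_pos[of "\<pi> I"] Pst_pos[of "\<pi> I"] by simp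
next
  case PInf
  then show ?thesis using opt_power_Icard_PInfty Pst_pos[of "\<pi> I"] by simp
next
  case MInf
  then show ?thesis using Icard_active[OF assms] by simp
qed

lemma opt_power_bounds: "1 \<le> a \<Longrightarrow> 0 \<le> p_opt a \<and> p_opt a \<le> Pst (\<pi> a)"
  using opt_power_below_Icard[of a] opt_power_above_Icard[of a] opt_power_Icard_bounds Pst_pos[of "\<pi> a"]
  by (cases a I rule: linorder_cases) auto

lemma water_level_eq: "water_level = 1 + rx_prefix I + (if I = 0 then 0 else h (\<pi> I) * p_opt I)"
proof -
  have "(\<Sum>a\<in>{1..CARD('k)}. h (\<pi> a) * p_opt a) = (\<Sum>a\<in>{1..I}. h (\<pi> a) * p_opt a)"
    using Icard_le_card[of mu Pst h g \<pi>] by (intro sum.mono_neutral_right) (auto simp: opt_power_above_Icard)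
  also have "\<dots> = rx_prefix I + (if I = 0 then 0 else h (\<pi> I) * p_opt I)"
  proof (cases "I = 0")
    case False
    then have "{1..I} = insert I {1..<I}" by auto
    then show ?thesis
      using False by (simp add: partial_rx_def opt_power_below_Icard)
  qed (simp add: partial_rx_empty)
  finally show ?thesis unfolding water_level_def by simp
qed

lemma level_le_ratio_Icard:
  assumes "1 \<le> I"
  shows "ereal water_level \<le> r (\<pi> I)"
proof (cases "r (\<pi> I)")
  case (real \<rho>)
  then have "p_opt I \<le> (\<rho> - 1 - rx_prefix I) / h (\<pi> I)" by (simp add: opt_power_Icard_ereal)
  then have "h (\<pi> I) * p_opt I \<le> \<rho> - 1 - rx_prefix I" using h_pos[of "\<pi> I"] by (simp add: field_simps)
  then show ?thesis using real assms by (simp add: water_level_eq)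
qed (use Icard_active[OF assms] in simp_all)

lemma ratio_Icard_le_level:
  assumes "1 \<le> I" "p_opt I < Pst (\<pi> I)"
  shows "r (\<pi> I) \<le> ereal water_level"
proof (cases "r (\<pi> I)")
  case (real \<rho>)
  then have "p_opt I = (\<rho> - 1 - rx_prefix I) / h (\<pi> I)" using assms(2) by (simp add: opt_power_Icard_ereal min_def split: if_splits)
  then have "h (\<pi> I) * p_opt I = \<rho> - 1 - rx_prefix I" using h_pos[of "\<pi> I"] by simp
  then show ?thesis using real assms(1) by (simp add: water_level_eq)
next
  case PInf
  then show ?thesis using assms(2) opt_power_Icard_PInfty by simp
qed simp

lemma ratio_after_Icard_le_level:
  assumes "I < a" "a \<le> CARD('k)"
  shows "r (\<pi> a) \<le> ereal water_level"
proof -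
  have sorted: "r (\<pi> a) \<le> r (\<pi> (Suc I))" using assms by (intro ratio_sorted) auto
  have inactive: "r (\<pi> (Suc I)) \<le> ereal (1 + rx_prefix (Suc I))"
    using assms by (intro inactive_after_Icard) auto
  consider "I = 0" | "1 \<le> I" "p_opt I = Pst (\<pi> I)" | "1 \<le> I" "p_opt I < Pst (\<pi> I)"
    using opt_power_Icard_bounds by fastforce
  then show ?thesis
  proof cases
    case 1
    then show ?thesis using order_trans[OF sorted inactive] by (simp add: water_level_eq partial_rx_empty)
  next
    case 2
    then show ?thesis using order_trans[OF sorted inactive] by (simp add: water_level_eq partial_rx_Suc add.assoc)
  next
    case 3
    have "r (\<pi> a) \<le> r (\<pi> I)" using 3 assms by (intro ratio_sorted) auto
    then show ?thesis using ratio_Icard_le_level[OF 3] by simp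
  qed
qed

lemma ratio_le_level_below_cap:
  assumes "1 \<le> a" "a \<le> CARD('k)" "p_opt a < Pst (\<pi> a)"
  shows "r (\<pi> a) \<le> ereal water_level"
  using assms opt_power_below_Icard[of a] ratio_Icard_le_level ratio_after_Icard_le_level
  by (cases a I rule: linorder_cases) auto

lemma level_le_ratio_positive:
  assumes "1 \<le> a" "a \<le> CARD('k)" "0 < p_opt a"
  shows "ereal water_level \<le> r (\<pi> a)"
proof -
  have "a \<le> I" using assms(3) opt_power_above_Icard[of a] by (cases "I < a") auto
  then have "r (\<pi> I) \<le> r (\<pi> a)" using assms(1) Icard_le_card[of mu Pst h g \<pi>] by (intro ratio_sorted) auto
  then show ?thesis using level_le_ratio_Icard \<open>a \<le> I\<close> assms(1) by (auto intro: order_trans)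
qed

theorem opt_power_strict_max:
  assumes generic: "generic_channel mu h g"
    and p: "\<And>a. a \<in> {1..CARD('k)} \<Longrightarrow> p (\<pi> a) = p_opt a"
  shows "feasible Pst p \<and> (\<forall>q. feasible Pst q \<and> q \<noteq> p \<longrightarrow> objective mu h g q < objective mu h g p)"
proof -
  have position: "\<exists>a\<in>{1..CARD('k)}. \<pi> a = k" for k
    using perm unfolding bij_betw_def by (metis UNIV_I imageE)
  have p_feasible: "feasible Pst p"
    unfolding feasible_def
  proof
    fix k
    obtain a where "a \<in> {1..CARD('k)}" "\<pi> a = k" using position by blast
    then show "0 \<le> p k \<and> p k \<le> Pst k" using p[of a] opt_power_bounds[of a] by auto
  qed
  have "(\<Sum>k\<in>UNIV. h k * p k) = (\<Sum>a\<in>{1..CARD('k)}. h (\<pi> a) * p (\<pi> a))"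
    using sum.reindex_bij_betw[OF perm, of "\<lambda>k. h k * p k"] by simp
  also have "\<dots> = (\<Sum>a\<in>{1..CARD('k)}. h (\<pi> a) * p_opt a)"
    using p by simp
  finally have level: "water_level = 1 + (\<Sum>k\<in>UNIV. h k * p k)"
    unfolding water_level_def by simp
  have c_nonneg: "0 \<le> interf_cost mu g k" for k
    using mu_nonneg g_nonneg by (rule interf_cost_nonneg)
  have below_cap: "h k \<le> water_level * interf_cost mu g k" if "p k < Pst k" for k
  proof -
    obtain a where "a \<in> {1..CARD('k)}" "\<pi> a = k" using position by blast
    then show ?thesis
      using ratio_le_level_below_cap[of a] that p c_nonneg by (auto intro: ratio_le_ereal_imp_le_mult)
  qed
  have above_zero: "water_level * interf_cost mu g k \<le> h k" if "0 < p k" for k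
  proof -
    obtain a where "a \<in> {1..CARD('k)}" "\<pi> a = k" using position by blast
    then show ?thesis
      using level_le_ratio_positive[of a] that p c_nonneg h_pos[of k]
      by (auto intro: ereal_le_ratio_imp_mult_le)
  qed
  have single_tie: "j = k"
    if "h j = water_level * interf_cost mu g j" "h k = water_level * interf_cost mu g k" for j k
  proof (rule ccontr)
    assume "j \<noteq> k"
    moreover have "interf_cost mu g k \<noteq> 0" using that(2) h_pos[of k] by auto
    ultimately have "h j * interf_cost mu g k \<noteq> h k * interf_cost mu g j"
      using generic unfolding generic_channel_def by blast
    then show False using that by simp
  qed
  show ?thesis
  proof (intro conjI allI impI p_feasible)
    fix q assume "feasible Pst q \<and> q \<noteq> p"
    then show "objective mu h g q < objective mu h g p"
      unfolding objective_eq_interf_cost level[symmetric]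
      using log_linear_kkt_strict_max[OF h_pos p_feasible _ _ level below_cap above_zero single_tie]
      by blast
  qed
qed

end

theorem lemma3p5:
  fixes M :: "'w measure"
    and H :: "'k::finite \<Rightarrow> 'w \<Rightarrow> real"
    and G :: "'k \<Rightarrow> 'm::finite \<Rightarrow> 'w \<Rightarrow> real"
    and mu :: "'m \<Rightarrow> real"
    and Pst :: "'k \<Rightarrow> real"
  assumes "prob_space M"
    and "\<And>k. H k \<in> borel_measurable M"
    and "\<And>k m. G k m \<in> borel_measurable M"
    and "\<And>k w. w \<in> space M \<Longrightarrow> H k w \<ge> 0"
    and "\<And>k m w. w \<in> space M \<Longrightarrow> G k m w \<ge> 0"
    and "prob_space.indep_vars M (\<lambda>_. borel)
           (\<lambda>i w. case i of Inl k \<Rightarrow> H k w | Inr km \<Rightarrow> G (fst km) (snd km) w) UNIV"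
    and "absolutely_continuous lborel
           (distr M lborel (\<lambda>w. ((\<chi> k. H k w) :: real^'k,
                                  (\<chi> km. G (fst km) (snd km) w) :: real^('k \<times> 'm))))"
    and "\<And>m. mu m \<ge> 0"
    and "\<And>k. Pst k > 0"
  shows "AE w in M. \<forall>\<pi> :: nat \<Rightarrow> 'k.
     (bij_betw \<pi> {1..CARD('k)} UNIV \<and>
      (\<forall>a b. 1 \<le> a \<and> a \<le> b \<and> b \<le> CARD('k) \<longrightarrow>
           ratio mu (\<lambda>k. H k w) (\<lambda>k m. G k m w) (\<pi> b) \<le> ratio mu (\<lambda>k. H k w) (\<lambda>k m. G k m w) (\<pi> a)))
     \<longrightarrow> (\<forall>p. (\<forall>a\<in>{1..CARD('k)}. p (\<pi> a) = opt_power mu Pst (\<lambda>k. H k w) (\<lambda>k m. G k m w) \<pi> a) \<longrightarrow>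
            feasible Pst p \<and>
            (\<forall>q. feasible Pst q \<and> q \<noteq> p \<longrightarrow>
                 objective mu (\<lambda>k. H k w) (\<lambda>k m. G k m w) q
                   < objective mu (\<lambda>k. H k w) (\<lambda>k m. G k m w) p))"
  using AE_generic_channel[OF assms(2,3,7), where mu=mu] AE_space
proof eventually_elim
  case (elim w)
  have H_pos: "0 < H k w" for k
    using assms(4)[OF elim(2), of k] elim(1) unfolding generic_channel_def by (simp add: order_le_neq_trans)
  show ?case
  proof (intro allI impI)
    fix \<pi> :: "nat \<Rightarrow> 'k" and p
    assume sorted_perm: "bij_betw \<pi> {1..CARD('k)} UNIV \<and>
      (\<forall>a b. 1 \<le> a \<and> a \<le> b \<and> b \<le> CARD('k) \<longrightarrow>
         ratio mu (\<lambda>k. H k w) (\<lambda>k m. G k m w) (\<pi> b) \<le> ratio mu (\<lambda>k. H k w) (\<lambda>k m. G k m w) (\<pi> a))"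
      and "\<forall>a\<in>{1..CARD('k)}. p (\<pi> a) = opt_power mu Pst (\<lambda>k. H k w) (\<lambda>k m. G k m w) \<pi> a"
    interpret water_filling mu Pst "\<lambda>k. H k w" "\<lambda>k m. G k m w" \<pi>
      using assms(5,8,9) elim(2) H_pos sorted_perm by unfold_locales auto
    show "feasible Pst p \<and> (\<forall>q. feasible Pst q \<and> q \<noteq> p \<longrightarrow>
        objective mu (\<lambda>k. H k w) (\<lambda>k m. G k m w) q < objective mu (\<lambda>k. H k w) (\<lambda>k m. G k m w) p)"
      using opt_power_strict_max elim(1) \<open>\<forall>a\<in>_. _\<close> by blast
  qed
qed

end
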